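(* (1) Let $C$ be a binary Euclidean LCD $[n,k]$ code with generator matrix $G$, let $\mathbf{y}\in C^{\perp_E}$, and let $C'$ be the binary code with generator matrix $G'=\begin{pmatrix}\mathbf{y}\\ G\end{pmatrix}$. If $wt(\mathbf{y})$ is odd, then $C'$ is a binary Euclidean LCD $[n,k+1]$ code. (2) Let $C$ be a ternary Euclidean LCD $[n,k]$ code with generator matrix $G$, let $\mathbf{y}\in C^{\perp_E}$, and let $C'$ be the ternary code with generator matrix $G'=\begin{pmatrix}\mathbf{y}\\ G\end{pmatrix}$. If $wt(\mathbf{y})\not\equiv 0\pmod 3$, then $C'$ is a ternary Euclidean LCD $[n,k+1]$ code. (3) Let $C$ be a quaternary Hermitian LCD $[n,k]$ code with generator matrix $G$, let $\mathbf{y}\in C^{\perp_H}$, and let $C'$ be the quaternary code with generator matrix $G'=\begin{pmatrix}\mathbf{y}\\ G\end{pmatrix}$. If $wt(\mathbf{y})$ is odd, then $C'$ is a quaternary Hermitian LCD $[n,k+1]$ code.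
   Context: Binary, ternary, quaternary codes are linear codes over $\mathbb{F}_2,\mathbb{F}_3,\mathbb{F}_4$. An $[n,k]$ code is a $k$-dimensional subspace of $\mathbb{F}_q^n$; a generator matrix has rows forming a basis. $wt$ is the Hamming weight. Euclidean inner product $\langle x,y\rangle_E=\sum x_iy_i$ with dual $C^{\perp_E}$; on $\mathbb{F}_4^n$ the Hermitian inner product is $\langle x,y\rangle_H=\sum x_iy_i^2$ with dual $C^{\perp_H}$. A code is (Euclidean/Hermitian) LCD if $C\cap C^{\perp}=\{0\}$. *)

theory Defs
  imports Main
begin

text \<open>Vectors of length n over a field 'f are functions 'n => 'f with 'n a finite
index type, n = CARD('n).  A generator matrix with k rows is a list of k vectors.\<close>

definition lin_comb :: "('n \<Rightarrow> 'f::field) list \<Rightarrow> (nat \<Rightarrow> 'f) \<Rightarrow> 'n \<Rightarrow> 'f" where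
  "lin_comb G c = (\<lambda>i. \<Sum>j<length G. c j * (G ! j) i)"

definition row_span :: "('n \<Rightarrow> 'f::field) list \<Rightarrow> ('n \<Rightarrow> 'f) set" where
  "row_span G = {v. \<exists>c. v = lin_comb G c}"

definition rows_lin_indep :: "('n \<Rightarrow> 'f::field) list \<Rightarrow> bool" where
  "rows_lin_indep G \<longleftrightarrow> (\<forall>c. lin_comb G c = (\<lambda>_. 0) \<longrightarrow> (\<forall>j<length G. c j = 0))"

definition is_generator_matrix :: "('n \<Rightarrow> 'f::field) list \<Rightarrow> ('n \<Rightarrow> 'f) set \<Rightarrow> nat \<Rightarrow> bool" where
  "is_generator_matrix G C k \<longleftrightarrow> length G = k \<and> rows_lin_indep G \<and> row_span G = C"

definition wt :: "('n::finite \<Rightarrow> 'f::zero) \<Rightarrow> nat" where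
  "wt x = card {i. x i \<noteq> 0}"

definition inner_E :: "('n::finite \<Rightarrow> 'f::field) \<Rightarrow> ('n \<Rightarrow> 'f) \<Rightarrow> 'f" where
  "inner_E x y = (\<Sum>i\<in>UNIV. x i * y i)"

text \<open>Hermitian inner product on F_4^n: sum x_i y_i^2.\<close>
definition inner_H :: "('n::finite \<Rightarrow> 'f::field) \<Rightarrow> ('n \<Rightarrow> 'f) \<Rightarrow> 'f" where
  "inner_H x y = (\<Sum>i\<in>UNIV. x i * (y i)^2)"

definition dual_E :: "('n::finite \<Rightarrow> 'f::field) set \<Rightarrow> ('n \<Rightarrow> 'f) set" where
  "dual_E C = {x. \<forall>c\<in>C. inner_E x c = 0}"

definition dual_H :: "('n::finite \<Rightarrow> 'f::field) set \<Rightarrow> ('n \<Rightarrow> 'f) set" where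
  "dual_H C = {x. \<forall>c\<in>C. inner_H x c = 0}"

definition LCD_E :: "('n::finite \<Rightarrow> 'f::field) set \<Rightarrow> bool" where
  "LCD_E C \<longleftrightarrow> C \<inter> dual_E C = {\<lambda>_. 0}"

definition LCD_H :: "('n::finite \<Rightarrow> 'f::field) set \<Rightarrow> bool" where
  "LCD_H C \<longleftrightarrow> C \<inter> dual_H C = {\<lambda>_. 0}"

end

theory Submission
  imports Defs "HOL-Number_Theory.Residues"
begin

text \<open>Let \<open>B\<close> be the relevant form. Every nonzero \<open>x\<close> in a field with \<open>q\<close> elements
  satisfies \<open>x\<^sup>q\<^sup>-\<^sup>1 = 1\<close>, so \<open>B(y,y)\<close> is \<open>wt y\<close> read in the prime field, and the weight
  condition says exactly that \<open>y\<close> is not self-orthogonal. As \<open>y \<bottom> C\<close>, this forces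
  \<open>y \<notin> C\<close>, so \<open>y\<close> extends the basis \<open>G\<close>. If \<open>x = a y + v\<close> with \<open>v \<in> C\<close> is orthogonal to
  \<open>C' = \<langle>y\<rangle> + C\<close>, pairing with \<open>y\<close> gives \<open>a B(y,y) = 0\<close>, hence \<open>a = 0\<close> and
  \<open>x \<in> C \<inter> C\<^sup>\<bottom> = 0\<close>. Besides linearity in the first argument this only uses that
  orthogonality is symmetric, which for the Hermitian form over \<open>\<bbbF>\<^sub>4\<close> follows from
  \<open>B(v,w)\<^sup>2 = B(w,v)\<close>.\<close>

lemma lin_comb_Cons:
  "lin_comb (y # G) c = (\<lambda>i. c 0 * y i + lin_comb G (\<lambda>j. c (Suc j)) i)"
  unfolding lin_comb_def length_Cons sum.lessThan_Suc_shift by simp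

lemma lin_comb_scale: "lin_comb G (\<lambda>j. a * c j) = (\<lambda>i. a * lin_comb G c i)"
  by (simp add: lin_comb_def sum_distrib_left mult.assoc)

lemma zero_in_row_span: "(\<lambda>_. 0) \<in> row_span G"
  unfolding row_span_def lin_comb_def by (auto intro!: exI[of _ "\<lambda>_. 0"])

lemma row_span_Cons:
  "row_span (y # G) = {\<lambda>i. a * y i + v i | a v. v \<in> row_span G}"
proof (intro equalityI subsetI)
  fix x assume "x \<in> row_span (y # G)"
  then obtain c where "x = lin_comb (y # G) c"
    by (auto simp: row_span_def)
  then show "x \<in> {\<lambda>i. a * y i + v i | a v. v \<in> row_span G}"
    unfolding lin_comb_Cons row_span_def by blast
next
  fix x assume "x \<in> {\<lambda>i. a * y i + v i | a v. v \<in> row_span G}"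
  then obtain a c where x: "x = (\<lambda>i. a * y i + lin_comb G c i)"
    by (auto simp: row_span_def)
  have "x = lin_comb (y # G) (\<lambda>j. if j = 0 then a else c (j - 1))"
    unfolding x lin_comb_Cons by simp
  then show "x \<in> row_span (y # G)"
    by (auto simp: row_span_def)
qed

lemma in_row_span_Cons: "y \<in> row_span (y # G)"
  using zero_in_row_span[of G] unfolding row_span_Cons by force

lemma row_span_subset_Cons: "row_span G \<subseteq> row_span (y # G)"
  unfolding row_span_Cons by force

lemma rows_lin_indep_Cons:
  assumes indep: "rows_lin_indep G" and y: "y \<notin> row_span G"
  shows "rows_lin_indep (y # G)"
  unfolding rows_lin_indep_def
proof (intro allI impI)
  fix c j
  assume c: "lin_comb (y # G) c = (\<lambda>_. 0)" and j: "j < length (y # G)"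
  have c0: "c 0 = 0"
  proof (rule ccontr)
    assume "c 0 \<noteq> 0"
    moreover have "c 0 * y i + lin_comb G (\<lambda>j. c (Suc j)) i = 0" for i
      using c by (simp add: lin_comb_Cons fun_eq_iff)
    ultimately have "y = lin_comb G (\<lambda>j. - (1 / c 0) * c (Suc j))"
      unfolding lin_comb_scale by (auto simp: fun_eq_iff field_simps eq_neg_iff_add_eq_0)
    with y show False
      by (auto simp: row_span_def)
  qed
  with c have "lin_comb G (\<lambda>j. c (Suc j)) = (\<lambda>_. 0)"
    by (simp add: lin_comb_Cons)
  with indep have "\<forall>j < length G. c (Suc j) = 0"
    by (auto simp: rows_lin_indep_def)
  with c0 j show "c j = 0"
    by (cases j) auto
qed

lemma is_generator_matrix_Cons:
  assumes "is_generator_matrix G C k" and "y \<notin> C"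
  shows "is_generator_matrix (y # G) (row_span (y # G)) (k + 1)"
  using assms rows_lin_indep_Cons by (auto simp: is_generator_matrix_def)

locale reflexive_form =
  fixes B :: "('n::finite \<Rightarrow> 'f::field) \<Rightarrow> ('n \<Rightarrow> 'f) \<Rightarrow> 'f"
  assumes linear_left: "B (\<lambda>i. a * x i + v i) w = a * B x w + B v w"
    and orthogonal_sym: "B v w = 0 \<Longrightarrow> B w v = 0"
begin

definition orth :: "('n \<Rightarrow> 'f) set \<Rightarrow> ('n \<Rightarrow> 'f) set" where
  "orth C = {x. \<forall>c\<in>C. B x c = 0}"

lemma zero_left: "B (\<lambda>_. 0) w = 0"
  using linear_left[of 1 "\<lambda>_. 0" "\<lambda>_. 0" w]
  by (simp only: mult_1 mult_zero_right add_0 add_cancel_right_right)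

lemma LCD_row_span_Cons:
  assumes lcd: "row_span G \<inter> orth (row_span G) = {\<lambda>_. 0}"
    and y: "y \<in> orth (row_span G)" and yy: "B y y \<noteq> 0"
  shows "row_span (y # G) \<inter> orth (row_span (y # G)) = {\<lambda>_. 0}"
proof (intro equalityI subsetI)
  fix x assume x: "x \<in> row_span (y # G) \<inter> orth (row_span (y # G))"
  then obtain a v where x_eq: "x = (\<lambda>i. a * y i + v i)" and v: "v \<in> row_span G"
    unfolding row_span_Cons by blast
  have "B v y = 0"
    using y v orthogonal_sym by (auto simp: orth_def)
  moreover have "B x y = 0"
    using x in_row_span_Cons by (auto simp: orth_def)
  ultimately have "a = 0"
    using yy by (simp add: x_eq linear_left)
  then have "x \<in> row_span G \<inter> orth (row_span G)"
    using x v row_span_subset_Cons by (auto simp: x_eq orth_def)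
  with lcd show "x \<in> {\<lambda>_. 0}"
    by blast
qed (auto simp: zero_in_row_span orth_def zero_left)

lemma LCD_extension:
  assumes G: "is_generator_matrix G C k" and lcd: "C \<inter> orth C = {\<lambda>_. 0}"
    and y: "y \<in> orth C" and yy: "B y y \<noteq> 0"
  shows "is_generator_matrix (y # G) (row_span (y # G)) (k + 1)
    \<and> row_span (y # G) \<inter> orth (row_span (y # G)) = {\<lambda>_. 0}"
proof
  have "y \<notin> C"
    using y yy by (auto simp: orth_def)
  with G show "is_generator_matrix (y # G) (row_span (y # G)) (k + 1)"
    by (rule is_generator_matrix_Cons)
  from G have "C = row_span G"
    by (simp add: is_generator_matrix_def)
  with lcd y yy show "row_span (y # G) \<inter> orth (row_span (y # G)) = {\<lambda>_. 0}"
    using LCD_row_span_Cons by blast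
qed

end

lemma field_power_card_minus_one:
  fixes x :: "'f::field"
  assumes "finite (UNIV :: 'f set)" and "x \<noteq> 0"
  shows "x ^ (card (UNIV :: 'f set) - 1) = 1"
proof -
  have "x ^ (card (UNIV :: 'f set) - 1) * (\<Prod>z\<in>UNIV - {0}. z)
      = (\<Prod>z\<in>UNIV - {0}. x * z)"
    using assms(1) by (simp add: prod.distrib card_Diff_singleton)
  also have "\<dots> = (\<Prod>z\<in>UNIV - {0}. z)"
    by (rule prod.reindex_bij_witness[of _ "\<lambda>z. z / x" "\<lambda>z. x * z"])
      (use assms in auto)
  finally show ?thesis
    using assms(1) by simp
qed

lemma CHAR_eq_if_card_prime_power:
  assumes "prime p" and "card (UNIV :: 'f::field set) = p ^ m" and "m > 0"
  shows "CHAR('f) = p"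
proof -
  have "finite (UNIV :: 'f set)"
    using assms by (intro card_ge_0_finite) (simp add: prime_gt_0_nat)
  then have "prime CHAR('f)"
    by (intro prime_CHAR_semidom finite_imp_CHAR_pos)
  moreover have "CHAR('f) dvd p"
    using CHAR_dvd_CARD[where 'a = 'f] assms prime_dvd_power calculation by metis
  ultimately show ?thesis
    using assms(1) primes_dvd_imp_eq by blast
qed

lemma sum_UNIV_eq_wt:
  fixes y :: "'n::finite \<Rightarrow> 'f::field"
  assumes "\<And>x. x \<noteq> 0 \<Longrightarrow> f x = 1" and "f 0 = 0"
  shows "(\<Sum>i\<in>UNIV. f (y i)) = of_nat (wt y)"
proof -
  have "(\<Sum>i\<in>UNIV. f (y i)) = (\<Sum>i\<in>{i. y i \<noteq> 0}. f (y i))"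
    using assms(2) by (intro sum.mono_neutral_right) auto
  also have "\<dots> = of_nat (wt y)"
    using assms(1) by (simp add: wt_def)
  finally show ?thesis .
qed

interpretation inner_E: reflexive_form inner_E
  rewrites "reflexive_form.orth inner_E = dual_E"
proof -
  show form: "reflexive_form inner_E"
    by unfold_locales
      (auto simp: inner_E_def algebra_simps sum.distrib sum_distrib_left mult.commute)
  show "reflexive_form.orth inner_E = dual_E"
    by (simp add: reflexive_form.orth_def[OF form] dual_E_def fun_eq_iff)
qed

lemma inner_H_swap:
  fixes v w :: "'n::finite \<Rightarrow> 'f::field"
  assumes char: "CHAR('f) = 2" and frob: "\<And>x::'f. x ^ 4 = x"
  shows "(inner_H v w)\<^sup>2 = inner_H w v"
proof -
  have "(inner_H v w)\<^sup>2 = (\<Sum>i\<in>UNIV. (v i * (w i)\<^sup>2)\<^sup>2)"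
    unfolding inner_H_def using char by (intro freshmans_dream_sum) simp_all
  also have "\<dots> = (\<Sum>i\<in>UNIV. (v i)\<^sup>2 * (w i) ^ 4)"
    by (simp add: power_mult_distrib flip: power_mult)
  also have "\<dots> = inner_H w v"
    by (simp add: inner_H_def frob mult.commute)
  finally show ?thesis .
qed

lemma reflexive_form_inner_H:
  assumes "CHAR('f) = 2" and "\<And>x::'f. x ^ 4 = x"
  shows "reflexive_form (inner_H :: ('n::finite \<Rightarrow> 'f::field) \<Rightarrow> _)"
proof
  show "inner_H v w = 0 \<Longrightarrow> inner_H w v = 0" for v w :: "'n \<Rightarrow> 'f"
    using inner_H_swap[OF assms, of v w] by simp
qed (auto simp: inner_H_def algebra_simps sum.distrib sum_distrib_left)

lemma binary_LCD_E_extension: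
  fixes G :: "('n::finite \<Rightarrow> 'f::field) list"
  assumes q: "card (UNIV :: 'f set) = 2" and G: "is_generator_matrix G C k"
    and lcd: "LCD_E C" and y: "y \<in> dual_E C" and odd: "odd (wt y)"
  shows "is_generator_matrix (y # G) (row_span (y # G)) (k + 1) \<and> LCD_E (row_span (y # G))"
proof -
  have "x * x = 1" if "x \<noteq> 0" for x :: 'f
    using field_power_card_minus_one[OF card_ge_0_finite that] q by simp
  then have "inner_E y y = of_nat (wt y)"
    unfolding inner_E_def by (intro sum_UNIV_eq_wt) auto
  moreover have "CHAR('f) = 2"
    using q by (intro CHAR_eq_if_card_prime_power[of 2 1]) simp_all
  ultimately have "inner_E y y \<noteq> 0"
    using odd by (simp add: of_nat_eq_0_iff_char_dvd)
  with G lcd y show ?thesis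
    unfolding LCD_E_def by (rule inner_E.LCD_extension)
qed

lemma ternary_LCD_E_extension:
  fixes G :: "('n::finite \<Rightarrow> 'f::field) list"
  assumes q: "card (UNIV :: 'f set) = 3" and G: "is_generator_matrix G C k"
    and lcd: "LCD_E C" and y: "y \<in> dual_E C" and wt: "wt y mod 3 \<noteq> 0"
  shows "is_generator_matrix (y # G) (row_span (y # G)) (k + 1) \<and> LCD_E (row_span (y # G))"
proof -
  have "x * x = 1" if "x \<noteq> 0" for x :: 'f
    using field_power_card_minus_one[OF card_ge_0_finite that] q by (simp add: power2_eq_square)
  then have "inner_E y y = of_nat (wt y)"
    unfolding inner_E_def by (intro sum_UNIV_eq_wt) auto
  moreover have "CHAR('f) = 3"
    using q by (intro CHAR_eq_if_card_prime_power[of 3 1]) simp_all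
  ultimately have "inner_E y y \<noteq> 0"
    using wt by (simp add: of_nat_eq_0_iff_char_dvd dvd_eq_mod_eq_0)
  with G lcd y show ?thesis
    unfolding LCD_E_def by (rule inner_E.LCD_extension)
qed

lemma quaternary_LCD_H_extension:
  fixes G :: "('n::finite \<Rightarrow> 'f::field) list"
  assumes q: "card (UNIV :: 'f set) = 4" and G: "is_generator_matrix G C k"
    and lcd: "LCD_H C" and y: "y \<in> dual_H C" and odd: "odd (wt y)"
  shows "is_generator_matrix (y # G) (row_span (y # G)) (k + 1) \<and> LCD_H (row_span (y # G))"
proof -
  have cube: "x * x\<^sup>2 = 1" if "x \<noteq> 0" for x :: 'f
    using field_power_card_minus_one[OF card_ge_0_finite that] q
    by (simp add: power3_eq_cube power2_eq_square mult.assoc)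
  then have frob: "x ^ 4 = x" for x :: 'f
    by (cases "x = 0") (simp_all add: power4_eq_xxxx power2_eq_square mult.assoc)
  have char: "CHAR('f) = 2"
    using q by (intro CHAR_eq_if_card_prime_power[of 2 2]) simp_all
  interpret inner_H: reflexive_form "inner_H :: ('n \<Rightarrow> 'f) \<Rightarrow> _"
    rewrites "reflexive_form.orth inner_H = dual_H"
  proof -
    show form: "reflexive_form (inner_H :: ('n \<Rightarrow> 'f) \<Rightarrow> _)"
      using char frob by (rule reflexive_form_inner_H)
    show "reflexive_form.orth (inner_H :: ('n \<Rightarrow> 'f) \<Rightarrow> _) = dual_H"
      by (simp add: reflexive_form.orth_def[OF form] dual_H_def fun_eq_iff)
  qed
  have "inner_H y y = of_nat (wt y)"
    unfolding inner_H_def using cube by (intro sum_UNIV_eq_wt) auto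
  with char odd have "inner_H y y \<noteq> 0"
    by (simp add: of_nat_eq_0_iff_char_dvd)
  with G lcd y show ?thesis
    unfolding LCD_H_def by (rule inner_H.LCD_extension)
qed

theorem theorem3p10:
  shows
  "(\<forall>(G :: ('n::finite \<Rightarrow> 'a::field) list) C k y.
      card (UNIV :: 'a set) = 2 \<longrightarrow> is_generator_matrix G C k \<longrightarrow> LCD_E C \<longrightarrow>
      y \<in> dual_E C \<longrightarrow> odd (wt y) \<longrightarrow>
      is_generator_matrix (y # G) (row_span (y # G)) (k + 1) \<and> LCD_E (row_span (y # G)))
 \<and> (\<forall>(G :: ('n::finite \<Rightarrow> 'b::field) list) C k y.
      card (UNIV :: 'b set) = 3 \<longrightarrow> is_generator_matrix G C k \<longrightarrow> LCD_E C \<longrightarrow>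
      y \<in> dual_E C \<longrightarrow> wt y mod 3 \<noteq> 0 \<longrightarrow>
      is_generator_matrix (y # G) (row_span (y # G)) (k + 1) \<and> LCD_E (row_span (y # G)))
 \<and> (\<forall>(G :: ('n::finite \<Rightarrow> 'c::field) list) C k y.
      card (UNIV :: 'c set) = 4 \<longrightarrow> is_generator_matrix G C k \<longrightarrow> LCD_H C \<longrightarrow>
      y \<in> dual_H C \<longrightarrow> odd (wt y) \<longrightarrow>
      is_generator_matrix (y # G) (row_span (y # G)) (k + 1) \<and> LCD_H (row_span (y # G)))"
  using binary_LCD_E_extension ternary_LCD_E_extension quaternary_LCD_H_extension by blast

end
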